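(* There exist a finitely generated residually finite group $G$ and a finite symmetric generating set $S$ of $G$ such that the lazy random walk $(X_n)_{n\ge0}$ on $\mathrm{Cay}(G,S)$ satisfies $$\lim_{n\to\infty}\mathbb{E}[D_G(X_n)]=\infty,$$ while $\sum_{k\ge2}\frac{1}{[G:\Lambda_k]}<\infty$.
   Context: For $g\ne e$, $D_G(g)=\min\{[G:N]: N\lhd G\text{ of finite index},\ g\notin N\}$, and $D_G(e)=0$. For $k\ge2$, $\Lambda_k$ is the intersection of all normal subgroups of $G$ of index at most $k$. The lazy random walk on $\mathrm{Cay}(G,S)$ is the Markov chain with $X_0=e$ and transition matrix $\frac12I+\frac12P$, $P(x,y)=\frac1{|S|}\#\{s\in S:y=xs\}$. *)

theory Defs
  imports "HOL-Algebra.Algebra" "HOL-Probability.Probability"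
begin

text \<open>Index of a subgroup H of G: number of right cosets (0 if infinitely many).\<close>
definition grp_index :: "('a, 'b) monoid_scheme \<Rightarrow> 'a set \<Rightarrow> nat" where
  "grp_index G H = card (rcosets\<^bsub>G\<^esub> H)"

definition finite_index_normal :: "('a, 'b) monoid_scheme \<Rightarrow> 'a set \<Rightarrow> bool" where
  "finite_index_normal G N \<longleftrightarrow> N \<lhd> G \<and> finite (rcosets\<^bsub>G\<^esub> N)"

definition finitely_generated :: "('a, 'b) monoid_scheme \<Rightarrow> bool" where
  "finitely_generated G \<longleftrightarrow> (\<exists>T. finite T \<and> T \<subseteq> carrier G \<and> generate G T = carrier G)"

definition residually_finite :: "('a, 'b) monoid_scheme \<Rightarrow> bool" where
  "residually_finite G \<longleftrightarrow>
     (\<forall>g\<in>carrier G. g \<noteq> \<one>\<^bsub>G\<^esub> \<longrightarrow> (\<exists>N. finite_index_normal G N \<and> g \<notin> N))"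

definition D_G :: "('a, 'b) monoid_scheme \<Rightarrow> 'a \<Rightarrow> nat" where
  "D_G G g = (if g = \<one>\<^bsub>G\<^esub> then 0
     else (LEAST n. \<exists>N. finite_index_normal G N \<and> g \<notin> N \<and> grp_index G N = n))"

definition Lambda :: "('a, 'b) monoid_scheme \<Rightarrow> nat \<Rightarrow> 'a set" where
  "Lambda G k = carrier G \<inter> \<Inter> {N. finite_index_normal G N \<and> grp_index G N \<le> k}"

definition symmetric_gen_set :: "('a, 'b) monoid_scheme \<Rightarrow> 'a set \<Rightarrow> bool" where
  "symmetric_gen_set G S \<longleftrightarrow> finite S \<and> S \<noteq> {} \<and> S \<subseteq> carrier G \<and>
     (\<forall>s\<in>S. inv\<^bsub>G\<^esub> s \<in> S) \<and> generate G S = carrier G"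

definition lazy_step :: "('a, 'b) monoid_scheme \<Rightarrow> 'a set \<Rightarrow> 'a \<Rightarrow> 'a pmf" where
  "lazy_step G S x = bind_pmf (bernoulli_pmf (1/2))
     (\<lambda>b. if b then return_pmf x else map_pmf (\<lambda>s. x \<otimes>\<^bsub>G\<^esub> s) (pmf_of_set S))"

primrec lazy_walk :: "('a, 'b) monoid_scheme \<Rightarrow> 'a set \<Rightarrow> nat \<Rightarrow> 'a pmf" where
  "lazy_walk G S 0 = return_pmf \<one>\<^bsub>G\<^esub>"
| "lazy_walk G S (Suc n) = bind_pmf (lazy_walk G S n) (lazy_step G S)"

end

theory Submission
  imports Defs
begin

(*
  The group is generated by seven permutations of a disjoint union of finite blocks: a cycle of
  every length r >= 1, all rotated at once by one generator z, and for every j a lamp block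
  (Z/2^(j+1)) x (Z/p_j), on which the other generators shift the position, add to the lamp value
  at position 2^j, or negate it at position 0. Pointwise stabilisers of blocks are normal of finite
  index, so the group is residually finite. The stabiliser of the r-cycle has index at most r
  and contains z^i only if r divides i; as Lambda_k lies in the stabilisers of the k- and the
  (k-1)-cycle, its index is at least k(k-1), and the series converges.
  A word of length l_k = 4 2^k + 4 changes only one lamp of block k, so it has prime order p_k
  and D_G of it is at least p_k. The lazy walk sits at this element with probability at least
  14^(-n) at every time n >= l_k, and p_k exceeds n 14^n for all n < l_(k+1); hence
  E[D_G(X_n)] >= n.
*)

section \<open>Lazy random walks\<close>

inductive walk_reachable :: "('a, 'b) monoid_scheme \<Rightarrow> 'a set \<Rightarrow> nat \<Rightarrow> 'a \<Rightarrow> bool"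
  for G S where
  start: "walk_reachable G S 0 \<one>\<^bsub>G\<^esub>"
| stay: "walk_reachable G S n g \<Longrightarrow> walk_reachable G S (Suc n) g"
| move: "walk_reachable G S n g \<Longrightarrow> s \<in> S \<Longrightarrow> walk_reachable G S (Suc n) (g \<otimes>\<^bsub>G\<^esub> s)"

lemma pmf_mult_le_expectation:
  fixes f :: "'a \<Rightarrow> real"
  assumes "integrable (measure_pmf M) f" "\<And>y. 0 \<le> f y"
  shows "pmf M x * f x \<le> measure_pmf.expectation M f"
proof -
  have "pmf M x * f x = measure_pmf.expectation M (\<lambda>y. f x * indicator {x} y)"
    by (simp add: measure_pmf_single)
  also have "\<dots> \<le> measure_pmf.expectation M f"
  proof (rule integral_mono[OF _ assms(1)])
    show "integrable M (\<lambda>y. f x * indicator {x} y)"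
      by (intro integrable_mult_right measure_pmf.integrable_const_bound[where B=1])
        (auto split: split_indicator)
  qed (use assms(2) in \<open>auto split: split_indicator\<close>)
  finally show ?thesis .
qed

lemma pmf_bind_ge: "pmf M x * pmf (f x) y \<le> pmf (bind_pmf M f) y"
  unfolding pmf_bind
  by (rule pmf_mult_le_expectation)
    (auto intro!: measure_pmf.integrable_const_bound[where B=1] pmf_le_1)

lemma lazy_step_stay: "1/2 \<le> pmf (lazy_step G S x) x"
  unfolding lazy_step_def by (rule order_trans[OF _ pmf_bind_ge[where x=True]]) simp

lemma lazy_step_move:
  assumes "finite S" "s \<in> S"
  shows "1 / (2 * real (card S)) \<le> pmf (lazy_step G S x) (x \<otimes>\<^bsub>G\<^esub> s)"
proof -
  have "pmf (pmf_of_set S) s \<le> pmf (map_pmf (\<lambda>s. x \<otimes>\<^bsub>G\<^esub> s) (pmf_of_set S)) (x \<otimes>\<^bsub>G\<^esub> s)"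
    unfolding pmf_map
    by (subst measure_pmf_single[symmetric]) (rule measure_pmf.finite_measure_mono, auto)
  moreover have "S \<noteq> {}" using assms(2) by auto
  ultimately show ?thesis
    unfolding lazy_step_def using assms by (intro order_trans[OF _ pmf_bind_ge[where x=False]]) auto
qed

lemma pmf_lazy_walk_ge:
  assumes "finite S" "walk_reachable G S n g"
  shows "(1 / (2 * real (card S))) ^ n \<le> pmf (lazy_walk G S n) g"
  using assms(2)
proof induction
  case start
  then show ?case by simp
next
  case (stay n g)
  have "1 / (2 * real (card S)) \<le> 1/2"
    by (cases "card S") (auto simp: field_simps)
  then have "(1 / (2 * real (card S))) ^ Suc n \<le> pmf (lazy_walk G S n) g * (1/2)"
    unfolding power_Suc2 using stay.IH by (intro mult_mono) auto
  also have "\<dots> \<le> pmf (lazy_walk G S n) g * pmf (lazy_step G S g) g"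
    by (rule mult_left_mono[OF lazy_step_stay pmf_nonneg])
  also have "\<dots> \<le> pmf (lazy_walk G S (Suc n)) g"
    by (simp add: pmf_bind_ge)
  finally show ?case .
next
  case (move n g s)
  have "(1 / (2 * real (card S))) ^ Suc n \<le>
      pmf (lazy_walk G S n) g * pmf (lazy_step G S g) (g \<otimes>\<^bsub>G\<^esub> s)"
    unfolding power_Suc2 using move.IH lazy_step_move[OF assms(1) move.hyps(2)]
    by (intro mult_mono) auto
  also have "\<dots> \<le> pmf (lazy_walk G S (Suc n)) (g \<otimes>\<^bsub>G\<^esub> s)"
    by (simp add: pmf_bind_ge)
  finally show ?case .
qed

lemma finite_set_pmf_lazy_walk: "finite S \<Longrightarrow> S \<noteq> {} \<Longrightarrow> finite (set_pmf (lazy_walk G S n))"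
  by (induction n) (auto simp: lazy_step_def set_pmf_of_set)

lemma lazy_walk_expectation_ge:
  assumes "finite S" "S \<noteq> {}" "walk_reachable G S n g" "\<And>x. 0 \<le> f x"
  shows "(1 / (2 * real (card S))) ^ n * f g \<le> measure_pmf.expectation (lazy_walk G S n) f"
proof -
  have "(1 / (2 * real (card S))) ^ n * f g \<le> pmf (lazy_walk G S n) g * f g"
    using pmf_lazy_walk_ge[OF assms(1,3)] assms(4) by (rule mult_right_mono)
  also have "\<dots> \<le> measure_pmf.expectation (lazy_walk G S n) f"
    using assms
    by (intro pmf_mult_le_expectation integrable_measure_pmf_finite finite_set_pmf_lazy_walk)
  finally show ?thesis .
qed

lemma lazy_walk_expectation_tendsto_at_top:
  assumes "finite S" "S \<noteq> {}" "\<And>x. 0 \<le> f x"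
    and "\<forall>\<^sub>F n in sequentially. \<exists>g. walk_reachable G S n g \<and> real n * (2 * real (card S)) ^ n \<le> f g"
  shows "filterlim (\<lambda>n. measure_pmf.expectation (lazy_walk G S n) f) at_top sequentially"
proof (rule filterlim_at_top_mono[OF filterlim_real_sequentially])
  show "\<forall>\<^sub>F n in sequentially. real n \<le> measure_pmf.expectation (lazy_walk G S n) f"
    using assms(4)
  proof eventually_elim
    case (elim n)
    then obtain g where g: "walk_reachable G S n g" "real n * (2 * real (card S)) ^ n \<le> f g"
      by blast
    have "card S > 0" using assms(1,2) by (simp add: card_gt_0_iff)
    then have "real n = (1 / (2 * real (card S))) ^ n * (real n * (2 * real (card S)) ^ n)"
      by (simp add: power_one_over)
    also have "\<dots> \<le> (1 / (2 * real (card S))) ^ n * f g"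
      using g(2) by (simp add: mult_left_mono)
    also have "\<dots> \<le> measure_pmf.expectation (lazy_walk G S n) f"
      by (rule lazy_walk_expectation_ge[OF assms(1,2) g(1) assms(3)])
    finally show ?case .
  qed
qed

lemma walk_reachable_mono: "walk_reachable G S n g \<Longrightarrow> n \<le> m \<Longrightarrow> walk_reachable G S m g"
  by (induction m) (auto simp: le_Suc_eq intro: walk_reachable.stay)

lemma walk_reachable_nat_pow: "s \<in> S \<Longrightarrow> walk_reachable G S m (s [^]\<^bsub>G\<^esub> m)"
  by (induction m) (auto intro: walk_reachable.intros)

lemma (in group) walk_reachable_closed:
  assumes "S \<subseteq> carrier G" "walk_reachable G S n g"
  shows "g \<in> carrier G"
  using assms(2) by induction (use assms(1) in auto)

lemma (in group) walk_reachable_generator: "S \<subseteq> carrier G \<Longrightarrow> s \<in> S \<Longrightarrow> walk_reachable G S 1 s"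
  using walk_reachable_nat_pow[of s S G 1] by auto

lemma (in group) walk_reachable_mult:
  assumes S: "S \<subseteq> carrier G" and x: "walk_reachable G S n x" and y: "walk_reachable G S m y"
  shows "walk_reachable G S (n + m) (x \<otimes> y)"
  using y
proof induction
  case start
  then show ?case using x walk_reachable_closed[OF S x] by simp
next
  case (stay m y)
  then show ?case by (simp add: walk_reachable.stay)
next
  case (move m y s)
  have "x \<otimes> (y \<otimes> s) = x \<otimes> y \<otimes> s"
    using S move.hyps walk_reachable_closed[OF S] x by (auto simp: m_assoc)
  then show ?case using walk_reachable.move[OF move.IH move.hyps(2)] by simp
qed

lemma (in group) generate_eq_walk_reachable:
  assumes S: "S \<subseteq> carrier G" and sym: "\<And>s. s \<in> S \<Longrightarrow> inv s \<in> S"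
  shows "generate G S = {g. \<exists>n. walk_reachable G S n g}"
proof (intro equalityI subsetI)
  fix g assume "g \<in> generate G S"
  then show "g \<in> {g. \<exists>n. walk_reachable G S n g}"
  proof induction
    case one
    then show ?case using walk_reachable.start by blast
  next
    case (incl s)
    then show ?case using walk_reachable_generator[OF S] by blast
  next
    case (inv s)
    then show ?case using walk_reachable_generator[OF S] sym by blast
  next
    case (eng g h)
    then show ?case using walk_reachable_mult[OF S] by blast
  qed
next
  fix g assume "g \<in> {g. \<exists>n. walk_reachable G S n g}"
  then obtain n where "walk_reachable G S n g" by blast
  then show "g \<in> generate G S"
    by induction (auto intro: generate.one generate.eng generate.incl)
qed

lemma finite_walk_reachable: "finite S \<Longrightarrow> finite {g. walk_reachable G S n g}"
proof (induction n)
  case 0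
  have "{g. walk_reachable G S 0 g} \<subseteq> {\<one>\<^bsub>G\<^esub>}"
    by (auto elim: walk_reachable.cases)
  then show ?case using finite_subset by blast
next
  case (Suc n)
  let ?A = "{g. walk_reachable G S n g}"
  have "{g. walk_reachable G S (Suc n) g} \<subseteq> ?A \<union> (\<lambda>(g, s). g \<otimes>\<^bsub>G\<^esub> s) ` (?A \<times> S)"
    by (auto elim: walk_reachable.cases)
  moreover have "finite (?A \<union> (\<lambda>(g, s). g \<otimes>\<^bsub>G\<^esub> s) ` (?A \<times> S))"
    using Suc by simp
  ultimately show ?case using finite_subset by blast
qed

lemma (in group) countable_generate:
  assumes "finite S" "S \<subseteq> carrier G" "\<And>s. s \<in> S \<Longrightarrow> inv s \<in> S"
  shows "countable (generate G S)"
proof -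
  have "generate G S = (\<Union>n. {g. walk_reachable G S n g})"
    using generate_eq_walk_reachable[OF assms(2,3)] by blast
  also have "countable \<dots>"
    by (intro countable_UN) (auto intro: countable_finite finite_walk_reachable[OF assms(1)])
  finally show ?thesis .
qed

section \<open>Finite quotients\<close>

lemma finite_index_normal_subset: "finite_index_normal G N \<Longrightarrow> N \<subseteq> carrier G"
  by (auto simp: finite_index_normal_def dest: normal_imp_subgroup subgroup.subset)

lemma (in group_hom) card_rcosets_kernel:
  "card (rcosets\<^bsub>G\<^esub> (kernel G H h)) = card (h ` carrier G)"
proof -
  let ?I = "H\<lparr>carrier := h ` carrier G\<rparr>"
  have "group_hom G ?I h"
    using subgroup.subgroup_is_group[OF img_is_subgroup H.is_group] homh
    unfolding group_hom_def group_hom_axioms_def hom_def by auto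
  then have "G Mod kernel G ?I h \<cong> ?I"
    by (rule group_hom.FactGroup_iso) simp
  moreover have "kernel G ?I h = kernel G H h"
    by (simp add: kernel_def)
  ultimately show ?thesis
    using iso_same_card by (fastforce simp: FactGroup_def)
qed

lemma (in group) prime_le_card_rcosets:
  assumes N: "N \<lhd> G" "finite (rcosets N)"
    and g: "g \<in> carrier G" "g \<notin> N" "g [^] p = \<one>" "Factorial_Ring.prime p"
  shows "p \<le> card (rcosets N)"
proof -
  interpret N: normal N G by (rule N(1))
  interpret Q: group "G Mod N" by (rule N.factorgroup_is_group)
  let ?x = "N #> g"
  have x: "?x \<in> carrier (G Mod N)"
    using g(1) by (auto simp: FactGroup_def RCOSETS_def)
  have "?x [^]\<^bsub>G Mod N\<^esub> p = N #> (g [^] p)"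
    using hom_nat_pow[OF N.r_coset_hom_Mod g(1) is_group Q.is_group] by simp
  then have "Q.ord ?x dvd p"
    using g(3) x Q.pow_eq_id N.subgroup_axioms by (simp add: coset_mult_one subgroup.subset)
  moreover have "?x \<noteq> \<one>\<^bsub>G Mod N\<^esub>"
    using g(1,2) rcos_self[OF g(1) N.subgroup_axioms] by auto
  then have "Q.ord ?x \<noteq> 1"
    using Q.ord_eq_1[OF x] by simp
  ultimately have "Q.ord ?x = p"
    using g(4) by (auto simp: prime_nat_iff)
  moreover have "Q.ord ?x dvd card (rcosets N)"
    using Q.ord_dvd_group_order[OF x] by (simp add: Coset.order_def FactGroup_def)
  moreover have "card (rcosets N) > 0"
    using N(2) x by (auto simp: FactGroup_def card_gt_0_iff)
  ultimately show ?thesis by (simp add: dvd_imp_le)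
qed

lemma D_G_ge_prime_order:
  assumes "group G" "residually_finite G"
    and g: "g \<in> carrier G" "g \<noteq> \<one>\<^bsub>G\<^esub>" "g [^]\<^bsub>G\<^esub> p = \<one>\<^bsub>G\<^esub>" "Factorial_Ring.prime p"
  shows "p \<le> D_G G g"
proof -
  let ?P = "\<lambda>n. \<exists>N. finite_index_normal G N \<and> g \<notin> N \<and> grp_index G N = n"
  have "\<exists>n. ?P n"
    using assms(2) g(1,2) unfolding residually_finite_def by blast
  then obtain N where N: "finite_index_normal G N" "g \<notin> N" "grp_index G N = (LEAST n. ?P n)"
    using LeastI_ex[of ?P] by blast
  have "p \<le> grp_index G N"
    using group.prime_le_card_rcosets[OF assms(1) _ _ g(1) N(2) g(3,4)] N(1)
    unfolding finite_index_normal_def grp_index_def by blast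
  then show ?thesis
    using N(3) g(2) by (simp add: D_G_def)
qed

definition walk_meets_large_prime_order :: "('a, 'b) monoid_scheme \<Rightarrow> 'a set \<Rightarrow> bool" where
  "walk_meets_large_prime_order G S \<longleftrightarrow>
     (\<forall>\<^sub>F n in sequentially. \<exists>g p. walk_reachable G S n g \<and> g \<noteq> \<one>\<^bsub>G\<^esub> \<and>
        Factorial_Ring.prime p \<and> g [^]\<^bsub>G\<^esub> p = \<one>\<^bsub>G\<^esub> \<and> real n * (2 * real (card S)) ^ n \<le> real p)"

lemma lazy_walk_expectation_D_G_at_top:
  assumes G: "group G" "residually_finite G" and S: "symmetric_gen_set G S"
    and "walk_meets_large_prime_order G S"
  shows "filterlim (\<lambda>n. measure_pmf.expectation (lazy_walk G S n) (\<lambda>x. real (D_G G x)))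
    at_top sequentially"
proof (rule lazy_walk_expectation_tendsto_at_top)
  show "finite S" "S \<noteq> {}" using S by (auto simp: symmetric_gen_set_def)
  show "\<forall>\<^sub>F n in sequentially.
      \<exists>g. walk_reachable G S n g \<and> real n * (2 * real (card S)) ^ n \<le> real (D_G G g)"
    using assms(4) unfolding walk_meets_large_prime_order_def
  proof (elim eventually_mono exE conjE)
    fix n g p
    assume g: "walk_reachable G S n g" "g \<noteq> \<one>\<^bsub>G\<^esub>" "Factorial_Ring.prime p"
      "g [^]\<^bsub>G\<^esub> p = \<one>\<^bsub>G\<^esub>" "real n * (2 * real (card S)) ^ n \<le> real p"
    have "g \<in> carrier G"
      using S g(1) group.walk_reachable_closed[OF G(1)] by (auto simp: symmetric_gen_set_def)
    then have "real p \<le> real (D_G G g)"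
      using D_G_ge_prime_order[OF G _ g(2) g(4) g(3)] by simp
    then show "\<exists>g. walk_reachable G S n g \<and> real n * (2 * real (card S)) ^ n \<le> real (D_G G g)"
      using g(1,5) by (blast intro: order_trans)
  qed
qed simp

lemma (in group) card_rcosets_ge_of_pow_mem:
  assumes H: "subgroup H G" "finite (rcosets H)" and z: "z \<in> carrier G"
    and m: "0 < m" "\<And>i. z [^] i \<in> H \<Longrightarrow> m dvd i"
  shows "m \<le> card (rcosets H)"
proof -
  have separated: "H #> z [^] a \<noteq> H #> z [^] b" if ab: "a < b" "b < m" for a b
  proof
    assume "H #> z [^] a = H #> z [^] b"
    then have "z [^] b \<in> H #> z [^] a"
      using rcos_self[OF nat_pow_closed[OF z] H(1)] by simp
    then have "z [^] b \<otimes> inv (z [^] a) \<in> H"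
      using subgroup.rcos_module_imp[OF H(1) is_group] z by simp
    moreover have "z [^] b = z [^] (b - a) \<otimes> z [^] a"
      using ab z by (simp add: nat_pow_mult)
    then have "z [^] b \<otimes> inv (z [^] a) = z [^] (b - a)"
      using z by (simp add: m_assoc)
    ultimately have "m dvd b - a" using m(2) by simp
    then show False using dvd_imp_le[of m "b - a"] ab by linarith
  qed
  have "inj_on (\<lambda>i. H #> z [^] i) {..<m}"
    by (rule inj_onI) (metis lessThan_iff linorder_neqE_nat separated)
  moreover have "(\<lambda>i. H #> z [^] i) ` {..<m} \<subseteq> rcosets H"
    using z by (auto simp: RCOSETS_def)
  ultimately show ?thesis
    using card_inj_on_le[OF _ _ H(2)] by fastforce
qed

lemma (in group) subgroup_Lambda: "subgroup (Lambda G k) G"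
proof (cases "{N. finite_index_normal G N \<and> grp_index G N \<le> k} = {}")
  case True
  then show ?thesis unfolding Lambda_def True by (simp add: subgroup_self)
next
  case False
  have "Lambda G k = \<Inter>{N. finite_index_normal G N \<and> grp_index G N \<le> k}"
    using False finite_index_normal_subset by (auto simp: Lambda_def)
  then show ?thesis
    using False by (auto intro!: subgroups_Inter simp: finite_index_normal_def normal_imp_subgroup)
qed

text \<open>Then \<open>G/N\<close> has order \<open>r\<close> and is generated by the image of \<open>z\<close>.\<close>
definition maps_onto_all_cyclic_groups :: "('a, 'b) monoid_scheme \<Rightarrow> 'a \<Rightarrow> bool" where
  "maps_onto_all_cyclic_groups G z \<longleftrightarrow>
     (\<forall>r\<ge>1. \<exists>N. finite_index_normal G N \<and> grp_index G N \<le> r \<and>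
        (\<forall>i::nat. z [^]\<^bsub>G\<^esub> i \<in> N \<longrightarrow> r dvd i))"

lemma (in group) index_Lambda_ge:
  assumes z: "z \<in> carrier G" "maps_onto_all_cyclic_groups G z"
    and k: "2 \<le> k" and fin: "finite (rcosets (Lambda G k))"
  shows "k * (k - 1) \<le> grp_index G (Lambda G k)"
proof -
  have quotient: "\<exists>N. Lambda G k \<subseteq> N \<and> (\<forall>i. z [^] i \<in> N \<longrightarrow> r dvd i)"
    if r: "1 \<le> r" "r \<le> k" for r
  proof -
    obtain N where N: "finite_index_normal G N" "grp_index G N \<le> r" "\<forall>i. z [^] i \<in> N \<longrightarrow> r dvd i"
      using z(2) r(1) unfolding maps_onto_all_cyclic_groups_def by blast
    then have "Lambda G k \<subseteq> N" using r(2) unfolding Lambda_def by auto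
    then show ?thesis using N(3) by blast
  qed
  obtain N1 where N1: "Lambda G k \<subseteq> N1" "\<forall>i. z [^] i \<in> N1 \<longrightarrow> k dvd i"
    using quotient[of k] k by auto
  have "1 \<le> k - 1" "k - 1 \<le> k" using k by auto
  then obtain N2 where N2: "Lambda G k \<subseteq> N2" "\<forall>i. z [^] i \<in> N2 \<longrightarrow> k - 1 dvd i"
    using quotient by blast
  have "k * (k - 1) dvd i" if "z [^] i \<in> Lambda G k" for i
  proof -
    have "k dvd i" "k - 1 dvd i"
      using N1 N2 that by auto
    moreover have "coprime k (k - 1)"
      by (rule coprime_diff_one_right_nat) (use k in simp)
    ultimately show ?thesis by (simp add: divides_mult)
  qed
  then show ?thesis
    unfolding grp_index_def using k
    by (intro card_rcosets_ge_of_pow_mem[OF subgroup_Lambda fin z(1)]) auto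
qed

lemma summable_inverse_index_Lambda:
  assumes "group G" "z \<in> carrier G" "maps_onto_all_cyclic_groups G z"
  shows "summable (\<lambda>k. 1 / real (grp_index G (Lambda G (k + 2))))"
proof (rule summable_comparison_test')
  show "summable (\<lambda>k. inverse (real (Suc k) ^ 2))"
    using summable_ignore_initial_segment[OF inverse_power_summable[of 2, where 'a=real], of 1]
    by (simp add: add.commute)
next
  fix k
  show "norm (1 / real (grp_index G (Lambda G (k + 2)))) \<le> inverse (real (Suc k) ^ 2)"
  proof (cases "finite (rcosets\<^bsub>G\<^esub> (Lambda G (k + 2)))")
    case True
    then have "(k + 2) * (k + 1) \<le> grp_index G (Lambda G (k + 2))"
      using group.index_Lambda_ge[OF assms(1) assms(2,3), of "k + 2"] by simp
    then have "real (Suc k) ^ 2 \<le> real (grp_index G (Lambda G (k + 2)))"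
      unfolding power2_eq_square of_nat_mult[symmetric] of_nat_le_iff
      by (rule order_trans[rotated]) simp
    then show ?thesis
      by (simp add: divide_inverse le_imp_inverse_le)
  next
    case False
    \<comment> \<open>infinite index: \<open>grp_index\<close> is \<open>0\<close> and \<open>1 / 0 = 0\<close>\<close>
    then show ?thesis by (simp add: grp_index_def)
  qed
qed

section \<open>Transport along isomorphisms\<close>

lemma iso_group_hom: "f \<in> iso H G \<Longrightarrow> group H \<Longrightarrow> group G \<Longrightarrow> group_hom H G f"
  by (simp add: group_hom_def group_hom_axioms_def iso_def)

lemma iso_inj_on: "f \<in> iso H G \<Longrightarrow> inj_on f (carrier H)"
  by (simp add: iso_def bij_betw_def)

lemma hom_walk_reachable:
  assumes "group_hom H G f" "S \<subseteq> carrier H" "walk_reachable H S n g"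
  shows "walk_reachable G (f ` S) n (f g)"
  using assms(3)
proof induction
  case start
  then show ?case using group_hom.hom_one[OF assms(1)] walk_reachable.start by metis
next
  case (stay n g)
  show ?case using stay.IH by (rule walk_reachable.stay)
next
  case (move n g s)
  have "f (g \<otimes>\<^bsub>H\<^esub> s) = f g \<otimes>\<^bsub>G\<^esub> f s"
    using assms(1,2) move.hyps group.walk_reachable_closed[of H S n g]
    by (auto intro!: group_hom.hom_mult simp: group_hom_def)
  then show ?case using walk_reachable.move[OF move.IH] move.hyps(2) by simp
qed

lemma iso_rcosets_image:
  assumes f: "f \<in> iso H G" and N: "N \<subseteq> carrier H"
  shows "rcosets\<^bsub>G\<^esub> (f ` N) = image f ` (rcosets\<^bsub>H\<^esub> N)"
proof -
  have coset: "f ` N #>\<^bsub>G\<^esub> f a = f ` (N #>\<^bsub>H\<^esub> a)" if "a \<in> carrier H" for a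
  proof -
    have "f ` N #>\<^bsub>G\<^esub> f a = (\<lambda>n. f n \<otimes>\<^bsub>G\<^esub> f a) ` N"
      by (auto simp: r_coset_def)
    also have "\<dots> = (\<lambda>n. f (n \<otimes>\<^bsub>H\<^esub> a)) ` N"
      using that N f by (intro image_cong) (auto simp: iso_def hom_mult)
    also have "\<dots> = f ` (N #>\<^bsub>H\<^esub> a)"
      by (auto simp: r_coset_def)
    finally show ?thesis .
  qed
  have "carrier G = f ` carrier H"
    using f by (simp add: iso_def bij_betw_def)
  then show ?thesis
    unfolding RCOSETS_def using coset by (auto simp: image_UN)
qed

lemma iso_finite_index_normal:
  assumes f: "f \<in> iso H G" "group H" "group G" and N: "finite_index_normal H N"
  shows "finite_index_normal G (f ` N) \<and> grp_index G (f ` N) = grp_index H N"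
proof -
  have NH: "N \<subseteq> carrier H"
    using N by (rule finite_index_normal_subset)
  have "rcosets\<^bsub>H\<^esub> N \<subseteq> Pow (carrier H)"
    using monoid.r_coset_subset_G[OF group.is_monoid[OF f(2)] NH] by (auto simp: RCOSETS_def)
  with inj_on_image_Pow[OF iso_inj_on[OF f(1)]] have "inj_on (image f) (rcosets\<^bsub>H\<^esub> N)"
    by (rule inj_on_subset)
  moreover have "rcosets\<^bsub>G\<^esub> (f ` N) = image f ` (rcosets\<^bsub>H\<^esub> N)"
    by (rule iso_rcosets_image[OF f(1) NH])
  moreover have "f ` N \<lhd> G"
    using iso_normal_subgroup[OF f] N by (simp add: finite_index_normal_def)
  ultimately show ?thesis
    using N unfolding finite_index_normal_def grp_index_def by (simp add: card_image)
qed

lemma iso_residually_finite: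
  assumes f: "f \<in> iso H G" "group H" "group G" and "residually_finite H"
  shows "residually_finite G"
  unfolding residually_finite_def
proof (intro ballI impI)
  fix g assume g: "g \<in> carrier G" "g \<noteq> \<one>\<^bsub>G\<^esub>"
  obtain a where a: "a \<in> carrier H" "g = f a"
    using g(1) f(1) by (auto simp: iso_def bij_betw_def)
  then have "a \<noteq> \<one>\<^bsub>H\<^esub>"
    using g(2) group_hom.hom_one[OF iso_group_hom[OF f]] by auto
  then obtain N where N: "finite_index_normal H N" "a \<notin> N"
    using assms(4) a(1) unfolding residually_finite_def by blast
  have "g \<notin> f ` N"
    using inj_on_image_mem_iff[OF iso_inj_on[OF f(1)] a(1) finite_index_normal_subset[OF N(1)]]
      a(2) N(2)
    by simp
  then show "\<exists>N. finite_index_normal G N \<and> g \<notin> N"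
    using iso_finite_index_normal[OF f N(1)] by blast
qed

lemma iso_symmetric_gen_set:
  assumes f: "f \<in> iso H G" "group H" "group G" and S: "symmetric_gen_set H S"
  shows "symmetric_gen_set G (f ` S)"
proof -
  have hom: "group_hom H G f"
    by (rule iso_group_hom[OF f])
  have SH: "S \<subseteq> carrier H"
    using S by (simp add: symmetric_gen_set_def)
  have "generate G (f ` S) = f ` generate H S"
    by (rule group_hom.generate_img[OF hom SH])
  also have "\<dots> = carrier G"
    using S f(1) by (simp add: symmetric_gen_set_def iso_def bij_betw_def)
  finally have "generate G (f ` S) = carrier G" .
  moreover have "f ` S \<subseteq> carrier G"
    using SH f(1) by (auto simp: iso_def hom_def)
  moreover have "inv\<^bsub>G\<^esub> (f s) \<in> f ` S" if "s \<in> S" for s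
  proof -
    have "inv\<^bsub>G\<^esub> (f s) = f (inv\<^bsub>H\<^esub> s)"
      using group_hom.hom_inv[OF hom] that SH by auto
    moreover have "inv\<^bsub>H\<^esub> s \<in> S"
      using that S by (simp add: symmetric_gen_set_def)
    ultimately show ?thesis by simp
  qed
  ultimately show ?thesis
    using S by (simp add: symmetric_gen_set_def)
qed

lemma iso_walk_meets_large_prime_order:
  assumes f: "f \<in> iso H G" "group H" "group G" and S: "S \<subseteq> carrier H"
    and "walk_meets_large_prime_order H S"
  shows "walk_meets_large_prime_order G (f ` S)"
proof -
  have hom: "group_hom H G f"
    by (rule iso_group_hom[OF f])
  have card: "card (f ` S) = card S"
    using inj_on_subset[OF iso_inj_on[OF f(1)] S] by (rule card_image)
  have nontrivial: "f g \<noteq> \<one>\<^bsub>G\<^esub>" if "g \<in> carrier H" "g \<noteq> \<one>\<^bsub>H\<^esub>" for g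
  proof
    assume "f g = \<one>\<^bsub>G\<^esub>"
    then have "f g = f \<one>\<^bsub>H\<^esub>"
      using group_hom.hom_one[OF hom] by simp
    then show False
      using inj_onD[OF iso_inj_on[OF f(1)] _ that(1) monoid.one_closed[OF group.is_monoid[OF f(2)]]]
        that(2)
      by blast
  qed
  show ?thesis
    using assms(5) unfolding walk_meets_large_prime_order_def
  proof (rule eventually_mono)
    fix n
    assume "\<exists>g p. walk_reachable H S n g \<and> g \<noteq> \<one>\<^bsub>H\<^esub> \<and> Factorial_Ring.prime p \<and>
      g [^]\<^bsub>H\<^esub> p = \<one>\<^bsub>H\<^esub> \<and> real n * (2 * real (card S)) ^ n \<le> real p"
    then obtain g p where g: "walk_reachable H S n g" "g \<noteq> \<one>\<^bsub>H\<^esub>" "Factorial_Ring.prime p"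
      "g [^]\<^bsub>H\<^esub> p = \<one>\<^bsub>H\<^esub>" "real n * (2 * real (card S)) ^ n \<le> real p"
      by blast
    have gH: "g \<in> carrier H"
      using group.walk_reachable_closed[OF f(2) S g(1)] .
    then have "f g [^]\<^bsub>G\<^esub> p = \<one>\<^bsub>G\<^esub>"
      using g(4) group_hom.hom_nat_pow[OF hom gH, of p] group_hom.hom_one[OF hom] by simp
    then show "\<exists>g p. walk_reachable G (f ` S) n g \<and> g \<noteq> \<one>\<^bsub>G\<^esub> \<and> Factorial_Ring.prime p \<and>
        g [^]\<^bsub>G\<^esub> p = \<one>\<^bsub>G\<^esub> \<and> real n * (2 * real (card (f ` S))) ^ n \<le> real p"
      using hom_walk_reachable[OF hom S g(1)] nontrivial[OF gH g(2)] g(3,5) unfolding card by blast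
  qed
qed

lemma iso_maps_onto_all_cyclic_groups:
  assumes f: "f \<in> iso H G" "group H" "group G"
    and z: "z \<in> carrier H" "maps_onto_all_cyclic_groups H z"
  shows "maps_onto_all_cyclic_groups G (f z)"
  unfolding maps_onto_all_cyclic_groups_def
proof (intro allI impI)
  fix r :: nat assume "1 \<le> r"
  then obtain N where N: "finite_index_normal H N" "grp_index H N \<le> r"
      "\<forall>i. z [^]\<^bsub>H\<^esub> i \<in> N \<longrightarrow> r dvd i"
    using z(2) unfolding maps_onto_all_cyclic_groups_def by blast
  have "f z [^]\<^bsub>G\<^esub> i \<in> f ` N \<longrightarrow> r dvd i" for i :: nat
  proof -
    have zi: "z [^]\<^bsub>H\<^esub> i \<in> carrier H"
      using monoid.nat_pow_closed[OF group.is_monoid[OF f(2)] z(1)] .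
    have "f z [^]\<^bsub>G\<^esub> i = f (z [^]\<^bsub>H\<^esub> i)"
      using group_hom.hom_nat_pow[OF iso_group_hom[OF f] z(1)] by simp
    then have "f z [^]\<^bsub>G\<^esub> i \<in> f ` N \<longleftrightarrow> z [^]\<^bsub>H\<^esub> i \<in> N"
      using inj_on_image_mem_iff[OF iso_inj_on[OF f(1)] zi finite_index_normal_subset[OF N(1)]]
      by simp
    then show ?thesis using N(3) by simp
  qed
  moreover have "finite_index_normal G (f ` N)" "grp_index G (f ` N) \<le> r"
    using iso_finite_index_normal[OF f N(1)] N(2) by auto
  ultimately show "\<exists>N. finite_index_normal G N \<and> grp_index G N \<le> r \<and> (\<forall>i. f z [^]\<^bsub>G\<^esub> i \<in> N \<longrightarrow> r dvd i)"
    by blast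
qed

lemma countable_group_iso_nat_monoid:
  assumes "group H" "countable (carrier H)"
  obtains G :: "nat monoid" and f where "group G" "f \<in> iso H G"
proof -
  define f where "f = to_nat_on (carrier H)"
  define G :: "nat monoid" where "G = \<lparr>carrier = f ` carrier H,
      monoid.mult = (\<lambda>x y. f (inv_into (carrier H) f x \<otimes>\<^bsub>H\<^esub> inv_into (carrier H) f y)),
      one = f \<one>\<^bsub>H\<^esub>\<rparr>"
  have inj: "inj_on f (carrier H)"
    using assms(2) by (simp add: f_def inj_on_to_nat_on)
  have "f (x \<otimes>\<^bsub>H\<^esub> y) = f x \<otimes>\<^bsub>G\<^esub> f y" if "x \<in> carrier H" "y \<in> carrier H" for x y
    using that inj by (simp add: G_def)
  then have "f \<in> hom H G"
    unfolding hom_def by (simp add: G_def)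
  moreover have "bij_betw f (carrier H) (carrier G)"
    using inj by (simp add: bij_betw_def G_def)
  ultimately have iso: "f \<in> iso H G"
    by (simp add: iso_def)
  moreover have "group (G\<lparr>one := f \<one>\<^bsub>H\<^esub>\<rparr>)"
    by (rule group.iso_imp_img_group[OF assms(1) iso])
  ultimately show ?thesis
    using that by (simp add: G_def)
qed

section \<open>Permutation groups\<close>

lemma restrict_in_Bij:
  assumes "\<And>y. y \<in> A \<Longrightarrow> u y \<in> A" "\<And>y. y \<in> A \<Longrightarrow> v y \<in> A"
    and "\<And>y. y \<in> A \<Longrightarrow> v (u y) = y" "\<And>y. y \<in> A \<Longrightarrow> u (v y) = y"
  shows "restrict u A \<in> Bij A"
proof -
  have "bij_betw u A A"
    by (rule bij_betwI[of u A A v]) (use assms in auto)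
  moreover have "bij_betw (restrict u A) A A = bij_betw u A A"
    by (rule bij_betw_cong) simp
  ultimately show ?thesis
    unfolding Bij_def by simp
qed

lemma carrier_BijGroup: "carrier (BijGroup A) = Bij A"
  by (simp add: BijGroup_def)

lemma BijGroup_mult_apply:
  "u \<in> Bij A \<Longrightarrow> v \<in> Bij A \<Longrightarrow> y \<in> A \<Longrightarrow> (u \<otimes>\<^bsub>BijGroup A\<^esub> v) y = u (v y)"
  by (simp add: BijGroup_def compose_def)

lemma BijGroup_mult_Bij: "u \<in> Bij A \<Longrightarrow> v \<in> Bij A \<Longrightarrow> u \<otimes>\<^bsub>BijGroup A\<^esub> v \<in> Bij A"
  using group.subgroup_self[OF group_BijGroup] subgroup.m_closed
  by (fastforce simp: carrier_BijGroup)

lemma BijGroup_mult_restrict: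
  assumes "restrict u A \<in> Bij A" "restrict v A \<in> Bij A" "\<And>y. y \<in> A \<Longrightarrow> v y \<in> A"
  shows "restrict u A \<otimes>\<^bsub>BijGroup A\<^esub> restrict v A = restrict (\<lambda>y. u (v y)) A"
  using assms unfolding BijGroup_def compose_def by (auto intro!: restrict_ext)

locale int_action =
  fixes A :: "'a set" and act :: "int \<Rightarrow> 'a \<Rightarrow> 'a"
  assumes act_closed: "y \<in> A \<Longrightarrow> act c y \<in> A"
    and act_0: "y \<in> A \<Longrightarrow> act 0 y = y"
    and act_add: "y \<in> A \<Longrightarrow> act c (act d y) = act (c + d) y"
begin

definition perm :: "int \<Rightarrow> 'a \<Rightarrow> 'a" where
  "perm c = restrict (act c) A"

lemma perm_Bij: "perm c \<in> Bij A"
  unfolding perm_def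
  by (rule restrict_in_Bij[where v = "act (- c)"]) (simp_all add: act_closed act_add act_0)

lemma perm_apply: "y \<in> A \<Longrightarrow> perm c y = act c y"
  by (simp add: perm_def)

lemma perm_mult: "perm c \<otimes>\<^bsub>BijGroup A\<^esub> perm d = perm (c + d)"
  using BijGroup_mult_restrict[OF perm_Bij[unfolded perm_def] perm_Bij[unfolded perm_def]
      act_closed]
  unfolding perm_def by (auto intro!: restrict_ext simp: act_add)

lemma perm_0: "perm 0 = \<one>\<^bsub>BijGroup A\<^esub>"
  unfolding perm_def by (auto simp: BijGroup_def act_0 intro!: restrict_ext)

lemma perm_inv: "inv\<^bsub>BijGroup A\<^esub> (perm c) = perm (- c)"
proof (rule group.inv_equality[OF group_BijGroup])
  show "perm (- c) \<otimes>\<^bsub>BijGroup A\<^esub> perm c = \<one>\<^bsub>BijGroup A\<^esub>"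
    by (simp add: perm_mult perm_0)
qed (simp_all add: perm_Bij BijGroup_def)

lemma perm_pow: "perm c [^]\<^bsub>BijGroup A\<^esub> (n::nat) = perm (c * int n)"
  by (induction n) (simp_all add: perm_0 perm_mult algebra_simps)

end

lemma restrict_group_hom:
  assumes K: "subgroup K (BijGroup U)" and B: "B \<subseteq> U"
    and invariant: "\<And>h y. h \<in> K \<Longrightarrow> y \<in> B \<Longrightarrow> h y \<in> B"
  shows "group_hom (BijGroup U\<lparr>carrier := K\<rparr>) (BijGroup B) (\<lambda>h. restrict h B)"
proof -
  have Bij: "restrict h B \<in> Bij B" if h: "h \<in> K" for h
  proof -
    have hU: "h \<in> Bij U"
      using subgroup.mem_carrier[OF K h] by (simp add: BijGroup_def)
    have "inv\<^bsub>BijGroup U\<^esub> h \<in> K"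
      using subgroup.m_inv_closed[OF K h] .
    then have "inv_into U h y \<in> B" if "y \<in> B" for y
      using invariant[of "inv\<^bsub>BijGroup U\<^esub> h" y] that B by (auto simp: inv_BijGroup[OF hU])
    moreover have "h (inv_into U h y) = y" if "y \<in> B" for y
    proof (rule f_inv_into_f)
      show "y \<in> h ` U" using hU that B by (auto simp: Bij_def bij_betw_def)
    qed
    ultimately have "B \<subseteq> h ` B"
      by (metis image_eqI subsetI)
    moreover have "inj_on h B"
      using hU B by (auto simp: Bij_def bij_betw_def intro: inj_on_subset)
    ultimately have "bij_betw h B B"
      using invariant[OF h] by (auto simp: bij_betw_def)
    moreover have "bij_betw (restrict h B) B B = bij_betw h B B"
      by (rule bij_betw_cong) simp
    ultimately show ?thesis
      unfolding Bij_def by simp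
  qed
  have mult: "restrict (h \<otimes>\<^bsub>BijGroup U\<^esub> g) B = restrict h B \<otimes>\<^bsub>BijGroup B\<^esub> restrict g B"
    if h: "h \<in> K" and g: "g \<in> K" for h g
  proof (rule extensionalityI[OF restrict_extensional])
    have "restrict h B \<otimes>\<^bsub>BijGroup B\<^esub> restrict g B \<in> Bij B"
      using Bij[OF h] Bij[OF g] by (simp add: BijGroup_def compose_Bij)
    then show "restrict h B \<otimes>\<^bsub>BijGroup B\<^esub> restrict g B \<in> extensional B"
      by (rule Bij_imp_extensional)
    fix y assume y: "y \<in> B"
    have "h \<in> Bij U" "g \<in> Bij U"
      using subgroup.mem_carrier[OF K] h g by (simp_all add: BijGroup_def)
    then have "(h \<otimes>\<^bsub>BijGroup U\<^esub> g) y = h (g y)"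
      using y B by (auto intro: BijGroup_mult_apply)
    also have "\<dots> = (restrict h B \<otimes>\<^bsub>BijGroup B\<^esub> restrict g B) y"
      using BijGroup_mult_apply[OF Bij[OF h] Bij[OF g] y] invariant[OF g y] y by simp
    finally show "restrict (h \<otimes>\<^bsub>BijGroup U\<^esub> g) B y = (restrict h B \<otimes>\<^bsub>BijGroup B\<^esub> restrict g B) y"
      using y by simp
  qed
  have "group (BijGroup U\<lparr>carrier := K\<rparr>)"
    by (rule subgroup.subgroup_is_group[OF K group_BijGroup])
  moreover have "(\<lambda>h. restrict h B) \<in> hom (BijGroup U\<lparr>carrier := K\<rparr>) (BijGroup B)"
    unfolding hom_def using Bij mult by (simp add: BijGroup_def[of B])
  ultimately show ?thesis
    unfolding group_hom_def group_hom_axioms_def using group_BijGroup by blast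
qed

lemma pointwise_stabiliser_finite_index:
  assumes K: "subgroup K (BijGroup U)" and B: "B \<subseteq> U" "finite B"
    and invariant: "\<And>h y. h \<in> K \<Longrightarrow> y \<in> B \<Longrightarrow> h y \<in> B"
  shows "finite_index_normal (BijGroup U\<lparr>carrier := K\<rparr>) {h \<in> K. \<forall>y\<in>B. h y = y} \<and>
    grp_index (BijGroup U\<lparr>carrier := K\<rparr>) {h \<in> K. \<forall>y\<in>B. h y = y} = card ((\<lambda>h. restrict h B) ` K)"
proof -
  let ?G = "BijGroup U\<lparr>carrier := K\<rparr>"
  interpret hom: group_hom ?G "BijGroup B" "\<lambda>h. restrict h B"
    by (rule restrict_group_hom[OF K B(1)]) (rule invariant)
  have kernel: "kernel ?G (BijGroup B) (\<lambda>h. restrict h B) = {h \<in> K. \<forall>y\<in>B. h y = y}"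
    by (auto simp: kernel_def BijGroup_def fun_eq_iff)
  have "(\<lambda>h. restrict h B) ` K \<subseteq> Pi\<^sub>E B (\<lambda>_. B)"
    using invariant by auto
  then have "finite ((\<lambda>h. restrict h B) ` K)"
    using finite_PiE[OF B(2), of "\<lambda>_. B"] B(2) finite_subset by blast
  moreover have "K \<noteq> {}"
    using subgroup.one_closed[OF K] by blast
  ultimately have "card ((\<lambda>h. restrict h B) ` K) > 0"
    by (simp add: card_gt_0_iff)
  then show ?thesis
    using hom.card_rcosets_kernel hom.normal_kernel kernel
    by (auto simp: finite_index_normal_def grp_index_def card_gt_0_iff)
qed

section \<open>The example\<close>

type_synonym point = "(nat \<times> int \<times> int) + (nat \<times> int)"

definition word_len :: "nat \<Rightarrow> nat" where
  "word_len k = 4 * 2 ^ k + 4"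

text \<open>Chosen so large that the element of order \<open>lamp_prime k\<close>, a word of length \<open>word_len k\<close>,
  outweighs the probability \<open>14\<^sup>-\<^sup>n\<close> of meeting it at any time \<open>n < word_len (Suc k)\<close>.\<close>
definition lamp_prime :: "nat \<Rightarrow> nat" where
  "lamp_prime k = (SOME p. Factorial_Ring.prime p \<and> word_len (Suc k) * 14 ^ word_len (Suc k) < p)"

lemma lamp_prime:
  "Factorial_Ring.prime (lamp_prime k)" "word_len (Suc k) * 14 ^ word_len (Suc k) < lamp_prime k"
proof -
  have "\<exists>p. Factorial_Ring.prime p \<and> word_len (Suc k) * 14 ^ word_len (Suc k) < p"
    using bigger_prime by blast
  from someI_ex[OF this] show "Factorial_Ring.prime (lamp_prime k)"
    "word_len (Suc k) * 14 ^ word_len (Suc k) < lamp_prime k"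
    unfolding lamp_prime_def by auto
qed

lemma lamp_prime_gt_2: "2 < lamp_prime k"
proof -
  have "2 \<le> word_len (Suc k)"
    by (simp add: word_len_def)
  also have "\<dots> \<le> word_len (Suc k) * 14 ^ word_len (Suc k)"
    by simp
  finally show ?thesis using lamp_prime(2)[of k] by linarith
qed

text \<open>\<open>Inl (j, i, x)\<close>: lamp block \<open>j\<close>, position \<open>i\<close> mod \<open>2\<^sup>j\<^sup>+\<^sup>1\<close>, lamp value \<open>x\<close> mod
  \<open>lamp_prime j\<close>; \<open>Inr (r, i)\<close>: point \<open>i\<close> of the cycle of length \<open>r\<close>.\<close>
definition points :: "point set" where
  "points = {Inl (j, i, x) | j i x. 0 \<le> i \<and> i < 2 ^ Suc j \<and> 0 \<le> x \<and> x < int (lamp_prime j)} \<union>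
            {Inr (r, i) | r i. 0 < r \<and> 0 \<le> i \<and> i < int r}"

lemma Inl_in_points [simp]:
  "Inl (j, i, x) \<in> points \<longleftrightarrow> 0 \<le> i \<and> i < 2 ^ Suc j \<and> 0 \<le> x \<and> x < int (lamp_prime j)"
  by (simp add: points_def)

lemma Inr_in_points [simp]: "Inr (r, i) \<in> points \<longleftrightarrow> 0 < r \<and> 0 \<le> i \<and> i < int r"
  by (simp add: points_def)

lemma points_cases [consumes 1, case_names lamp cycle]:
  assumes "y \<in> points"
  obtains j i x where "y = Inl (j, i, x)" "0 \<le> i" "i < 2 ^ Suc j" "0 \<le> x" "x < int (lamp_prime j)"
  | r i where "y = Inr (r, i)" "0 < r" "0 \<le> i" "i < int r"
  using assms by (auto simp: points_def)

definition shift :: "int \<Rightarrow> point \<Rightarrow> point" where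
  "shift c y = (case y of Inl (j, i, x) \<Rightarrow> Inl (j, (i + c) mod 2 ^ Suc j, x) | Inr q \<Rightarrow> Inr q)"

definition lamp_add :: "int \<Rightarrow> point \<Rightarrow> point" where
  "lamp_add c y = (case y of
     Inl (j, i, x) \<Rightarrow> Inl (j, i, if i = 2 ^ j then (x + c) mod int (lamp_prime j) else x)
   | Inr q \<Rightarrow> Inr q)"

definition lamp_neg :: "point \<Rightarrow> point" where
  "lamp_neg y = (case y of
     Inl (j, i, x) \<Rightarrow> Inl (j, i, if i = 0 then (- x) mod int (lamp_prime j) else x)
   | Inr q \<Rightarrow> Inr q)"

definition rotate_cycles :: "int \<Rightarrow> point \<Rightarrow> point" where
  "rotate_cycles c y = (case y of Inl q \<Rightarrow> Inl q | Inr (r, i) \<Rightarrow> Inr (r, (i + c) mod int r))"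

definition single_lamp_add :: "nat \<Rightarrow> int \<Rightarrow> point \<Rightarrow> point" where
  "single_lamp_add k c y = (case y of
     Inl (j, i, x) \<Rightarrow> Inl (j, i, if j = k \<and> i = 2 ^ k then (x + c) mod int (lamp_prime j) else x)
   | Inr q \<Rightarrow> Inr q)"

interpretation shift: int_action points shift
  by unfold_locales (auto elim!: points_cases simp: shift_def mod_add_right_eq ac_simps)

interpretation lamp: int_action points lamp_add
  by unfold_locales (auto elim!: points_cases simp: lamp_add_def mod_add_right_eq ac_simps)

interpretation rotation: int_action points rotate_cycles
  by unfold_locales (auto elim!: points_cases simp: rotate_cycles_def mod_add_right_eq ac_simps)

interpretation single_lamp: int_action points "single_lamp_add k" for k
  by unfold_locales (auto elim!: points_cases simp: single_lamp_add_def mod_add_right_eq ac_simps)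

definition neg_perm :: "point \<Rightarrow> point" where
  "neg_perm = restrict lamp_neg points"

lemma lamp_neg_closed: "y \<in> points \<Longrightarrow> lamp_neg y \<in> points"
  using lamp_prime_gt_2 by (auto elim!: points_cases simp: lamp_neg_def)

lemma lamp_neg_lamp_neg: "y \<in> points \<Longrightarrow> lamp_neg (lamp_neg y) = y"
  by (auto elim!: points_cases simp: lamp_neg_def mod_minus_eq)

lemma neg_perm_Bij: "neg_perm \<in> Bij points"
  unfolding neg_perm_def
  by (rule restrict_in_Bij[where v = lamp_neg]) (simp_all add: lamp_neg_closed lamp_neg_lamp_neg)

lemma neg_perm_inv: "inv\<^bsub>BijGroup points\<^esub> neg_perm = neg_perm"
proof (rule group.inv_equality[OF group_BijGroup])
  have "neg_perm \<otimes>\<^bsub>BijGroup points\<^esub> neg_perm = restrict (\<lambda>y. lamp_neg (lamp_neg y)) points"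
    unfolding neg_perm_def
    by (rule BijGroup_mult_restrict[OF neg_perm_Bij[unfolded neg_perm_def]
          neg_perm_Bij[unfolded neg_perm_def] lamp_neg_closed])
  also have "\<dots> = \<one>\<^bsub>BijGroup points\<^esub>"
    by (auto simp: BijGroup_def lamp_neg_lamp_neg intro!: restrict_ext)
  finally show "neg_perm \<otimes>\<^bsub>BijGroup points\<^esub> neg_perm = \<one>\<^bsub>BijGroup points\<^esub>" .
qed (simp_all add: neg_perm_Bij BijGroup_def)

definition generators :: "(point \<Rightarrow> point) set" where
  "generators = {shift.perm 1, shift.perm (-1), lamp.perm 1, lamp.perm (-1), neg_perm,
                 rotation.perm 1, rotation.perm (-1)}"

definition perm_group :: "(point \<Rightarrow> point) monoid" where
  "perm_group = subgroup_generated (BijGroup points) generators"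

lemma generators_Bij: "generators \<subseteq> Bij points"
  by (simp add: generators_def shift.perm_Bij lamp.perm_Bij rotation.perm_Bij neg_perm_Bij)

lemma generators_inv: "s \<in> generators \<Longrightarrow> inv\<^bsub>BijGroup points\<^esub> s \<in> generators"
  by (auto simp: generators_def shift.perm_inv lamp.perm_inv rotation.perm_inv neg_perm_inv)

lemma perm_group_eq:
  "perm_group = BijGroup points\<lparr>carrier := generate (BijGroup points) generators\<rparr>"
  using generators_Bij by (simp add: perm_group_def subgroup_generated_def BijGroup_def Int_absorb1)

lemma carrier_perm_group: "carrier perm_group = generate (BijGroup points) generators"
  by (simp add: perm_group_eq)

lemma subgroup_carrier_perm_group: "subgroup (carrier perm_group) (BijGroup points)"
  unfolding carrier_perm_group
  by (rule group.generate_is_subgroup[OF group_BijGroup]) (simp add: generators_Bij BijGroup_def)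

lemma group_perm_group: "group perm_group"
  unfolding perm_group_def by (rule group.group_subgroup_generated[OF group_BijGroup])

lemma mult_perm_group: "x \<otimes>\<^bsub>perm_group\<^esub> y = x \<otimes>\<^bsub>BijGroup points\<^esub> y"
  by (simp add: perm_group_def)

lemma one_perm_group: "\<one>\<^bsub>perm_group\<^esub> = \<one>\<^bsub>BijGroup points\<^esub>"
  by (simp add: perm_group_def)

lemma pow_perm_group: "x [^]\<^bsub>perm_group\<^esub> (n::nat) = x [^]\<^bsub>BijGroup points\<^esub> n"
  by (simp add: perm_group_def pow_subgroup_generated)

lemma card_generators: "card generators \<le> 7"
proof -
  let ?gens = "[shift.perm 1, shift.perm (-1), lamp.perm 1, lamp.perm (-1), neg_perm,
    rotation.perm 1, rotation.perm (-1)]"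
  have "card generators = card (set ?gens)"
    by (simp only: generators_def set_simps)
  also have "\<dots> \<le> length ?gens"
    by (rule card_length)
  also have "\<dots> = 7"
    by simp
  finally show ?thesis .
qed

lemma symmetric_gen_set_perm_group: "symmetric_gen_set perm_group generators"
proof -
  have sub: "generators \<subseteq> carrier perm_group"
    by (auto simp: carrier_perm_group intro: generate.incl)
  have "generate perm_group generators = generate (BijGroup points) generators"
    unfolding perm_group_eq
    using group.generate_consistent[OF group_BijGroup] sub subgroup_carrier_perm_group
    by (simp add: carrier_perm_group)
  then have "generate perm_group generators = carrier perm_group"
    by (simp add: carrier_perm_group)
  moreover have "inv\<^bsub>perm_group\<^esub> s \<in> generators" if "s \<in> generators" for s
  proof -
    have "inv\<^bsub>perm_group\<^esub> s = inv\<^bsub>BijGroup points\<^esub> s"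
      unfolding perm_group_def
      by (rule group.inv_subgroup_generated[OF group_BijGroup])
        (use that sub in \<open>auto simp: perm_group_def\<close>)
    then show ?thesis using generators_inv[OF that] by simp
  qed
  ultimately show ?thesis
    using sub by (auto simp: symmetric_gen_set_def generators_def)
qed

lemma countable_carrier_perm_group: "countable (carrier perm_group)"
  unfolding carrier_perm_group
  by (rule group.countable_generate[OF group_BijGroup])
    (use generators_Bij generators_inv in \<open>auto simp: generators_def BijGroup_def\<close>)

fun block :: "point \<Rightarrow> nat + nat" where
  "block (Inl (j, _, _)) = Inl j"
| "block (Inr (r, _)) = Inr r"

definition block_set :: "nat + nat \<Rightarrow> point set" where
  "block_set \<beta> = {y \<in> points. block y = \<beta>}"

lemma block_set_Inl:
  "block_set (Inl j) \<subseteq> (\<lambda>(i, x). Inl (j, i, x)) ` ({0..<2 ^ Suc j} \<times> {0..<int (lamp_prime j)})"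
  by (auto simp: block_set_def elim!: points_cases)

lemma block_set_Inr: "block_set (Inr r) = (\<lambda>i. Inr (r, i)) ` {0..<int r}"
  by (auto simp: block_set_def elim!: points_cases)

lemma finite_block_set: "finite (block_set \<beta>)"
proof (cases \<beta>)
  case (Inl j)
  then show ?thesis using block_set_Inl finite_subset by blast
next
  case (Inr r)
  then show ?thesis by (simp add: block_set_Inr)
qed

definition respects_blocks :: "(point \<Rightarrow> point) \<Rightarrow> bool" where
  "respects_blocks h \<longleftrightarrow> (\<forall>y\<in>points. block (h y) = block y) \<and>
     (\<forall>r>0. \<exists>c. \<forall>i\<in>{0..<int r}. h (Inr (r, i)) = rotate_cycles c (Inr (r, i)))"

lemma respects_blocks_mult:
  assumes "u \<in> Bij points" "v \<in> Bij points" "respects_blocks u" "respects_blocks v"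
  shows "respects_blocks (u \<otimes>\<^bsub>BijGroup points\<^esub> v)"
  unfolding respects_blocks_def
proof (intro conjI ballI allI impI)
  have v_closed: "v y \<in> points" if "y \<in> points" for y
    using assms(2) that by (auto simp: Bij_def bij_betw_def)
  fix y assume "y \<in> points"
  then show "block ((u \<otimes>\<^bsub>BijGroup points\<^esub> v) y) = block y"
    using assms v_closed by (simp add: BijGroup_mult_apply respects_blocks_def)
next
  fix r :: nat assume r: "0 < r"
  obtain c where c: "\<forall>i\<in>{0..<int r}. u (Inr (r, i)) = rotate_cycles c (Inr (r, i))"
    using assms(3) r unfolding respects_blocks_def by blast
  obtain d where d: "\<forall>i\<in>{0..<int r}. v (Inr (r, i)) = rotate_cycles d (Inr (r, i))"
    using assms(4) r unfolding respects_blocks_def by blast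
  have "(u \<otimes>\<^bsub>BijGroup points\<^esub> v) (Inr (r, i)) = rotate_cycles (c + d) (Inr (r, i))"
    if "i \<in> {0..<int r}" for i
  proof -
    have "(u \<otimes>\<^bsub>BijGroup points\<^esub> v) (Inr (r, i)) = u (rotate_cycles d (Inr (r, i)))"
      using assms(1,2) that r d by (simp add: BijGroup_mult_apply)
    also have "\<dots> = rotate_cycles c (rotate_cycles d (Inr (r, i)))"
      using c r by (simp add: rotate_cycles_def)
    also have "\<dots> = rotate_cycles (c + d) (Inr (r, i))"
      using that r by (simp add: rotation.act_add)
    finally show ?thesis .
  qed
  then show "\<exists>c. \<forall>i\<in>{0..<int r}. (u \<otimes>\<^bsub>BijGroup points\<^esub> v) (Inr (r, i)) = rotate_cycles c (Inr (r, i))"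
    by blast
qed

lemma respects_blocks_rotation: "respects_blocks (rotation.perm c)"
  unfolding respects_blocks_def
  by (auto simp: rotation.perm_apply rotate_cycles_def elim!: points_cases intro!: exI[of _ c])

lemma respects_blocks_if_fixes_cycles:
  assumes "\<forall>y\<in>points. block (h y) = block y"
    and "\<And>r i. Inr (r, i) \<in> points \<Longrightarrow> h (Inr (r, i)) = Inr (r, i)"
  shows "respects_blocks h"
  unfolding respects_blocks_def
  using assms by (auto intro!: exI[of _ 0] simp: rotate_cycles_def)

lemma respects_blocks_generators: "s \<in> generators \<Longrightarrow> respects_blocks s"
proof -
  have "respects_blocks (shift.perm c)" "respects_blocks (lamp.perm c)" "respects_blocks neg_perm"
    for c
    by (auto intro!: respects_blocks_if_fixes_cycles elim!: points_cases
        simp: shift.perm_apply lamp.perm_apply neg_perm_def shift_def lamp_add_def lamp_neg_def)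
  moreover assume "s \<in> generators"
  ultimately show ?thesis
    using respects_blocks_rotation by (auto simp: generators_def)
qed

lemma perm_group_Bij: "h \<in> carrier perm_group \<Longrightarrow> h \<in> Bij points"
  using subgroup.mem_carrier[OF subgroup_carrier_perm_group] by (simp add: carrier_BijGroup)

lemma perm_group_closed: "h \<in> carrier perm_group \<Longrightarrow> y \<in> points \<Longrightarrow> h y \<in> points"
  using Bij_imp_funcset[OF perm_group_Bij] by blast

lemma respects_blocks_perm_group: "h \<in> carrier perm_group \<Longrightarrow> respects_blocks h"
  unfolding carrier_perm_group
proof (induction rule: generate.induct)
  case one
  show ?case using respects_blocks_rotation[of 0] by (simp add: rotation.perm_0)
next
  case (incl s)
  then show ?case by (rule respects_blocks_generators)
next
  case (inv s)
  then show ?case by (intro respects_blocks_generators generators_inv)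
next
  case (eng u v)
  have "u \<in> Bij points" "v \<in> Bij points"
    using eng.hyps perm_group_Bij by (simp_all add: carrier_perm_group)
  then show ?case
    using eng.IH by (rule respects_blocks_mult)
qed

lemma block_set_invariant: "h \<in> carrier perm_group \<Longrightarrow> y \<in> block_set \<beta> \<Longrightarrow> h y \<in> block_set \<beta>"
  using respects_blocks_perm_group perm_group_closed
  by (auto simp: block_set_def respects_blocks_def)

lemma block_stabiliser_finite_index:
  "finite_index_normal perm_group {h \<in> carrier perm_group. \<forall>y\<in>block_set \<beta>. h y = y} \<and>
   grp_index perm_group {h \<in> carrier perm_group. \<forall>y\<in>block_set \<beta>. h y = y} =
     card ((\<lambda>h. restrict h (block_set \<beta>)) ` carrier perm_group)"
proof -
  have "block_set \<beta> \<subseteq> points"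
    by (auto simp: block_set_def)
  then have "finite_index_normal (BijGroup points\<lparr>carrier := carrier perm_group\<rparr>)
      {h \<in> carrier perm_group. \<forall>y\<in>block_set \<beta>. h y = y} \<and>
    grp_index (BijGroup points\<lparr>carrier := carrier perm_group\<rparr>)
      {h \<in> carrier perm_group. \<forall>y\<in>block_set \<beta>. h y = y} =
    card ((\<lambda>h. restrict h (block_set \<beta>)) ` carrier perm_group)"
    by (rule pointwise_stabiliser_finite_index[OF subgroup_carrier_perm_group _ finite_block_set])
      (rule block_set_invariant)
  moreover have "BijGroup points\<lparr>carrier := carrier perm_group\<rparr> = perm_group"
    by (simp add: perm_group_eq)
  ultimately show ?thesis
    by simp
qed

lemma residually_finite_perm_group: "residually_finite perm_group"
  unfolding residually_finite_def
proof (intro ballI impI)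
  fix g assume g: "g \<in> carrier perm_group" "g \<noteq> \<one>\<^bsub>perm_group\<^esub>"
  have "g \<in> Bij points"
    using perm_group_Bij[OF g(1)] .
  moreover have "\<one>\<^bsub>perm_group\<^esub> = (\<lambda>y\<in>points. y)"
    by (simp add: one_perm_group BijGroup_def)
  ultimately obtain y where y: "y \<in> points" "g y \<noteq> y"
    using g(2) extensionalityI[OF Bij_imp_extensional restrict_extensional, of g points "\<lambda>y. y"]
    by auto
  then have "g \<notin> {h \<in> carrier perm_group. \<forall>y'\<in>block_set (block y). h y' = y'}"
    by (auto simp: block_set_def)
  then show "\<exists>N. finite_index_normal perm_group N \<and> g \<notin> N"
    using block_stabiliser_finite_index by blast
qed

lemma maps_onto_all_cyclic_groups_perm_group:
  "maps_onto_all_cyclic_groups perm_group (rotation.perm 1)"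
  unfolding maps_onto_all_cyclic_groups_def
proof (intro allI impI)
  fix r :: nat assume r: "1 \<le> r"
  let ?B = "block_set (Inr r)"
  let ?N = "{h \<in> carrier perm_group. \<forall>y\<in>?B. h y = y}"
  have "(\<lambda>h. restrict h ?B) ` carrier perm_group \<subseteq>
      (\<lambda>c. restrict (rotate_cycles c) ?B) ` {0..<int r}"
  proof
    fix u assume "u \<in> (\<lambda>h. restrict h ?B) ` carrier perm_group"
    then obtain h where h: "h \<in> carrier perm_group" "u = restrict h ?B" by blast
    have "0 < r" using r by simp
    then obtain c where c: "\<forall>i\<in>{0..<int r}. h (Inr (r, i)) = rotate_cycles c (Inr (r, i))"
      using respects_blocks_perm_group[OF h(1)] unfolding respects_blocks_def by blast
    have "u = restrict (rotate_cycles (c mod int r)) ?B"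
      unfolding h(2) block_set_Inr using c
      by (auto simp: rotate_cycles_def mod_add_right_eq intro!: restrict_ext)
    moreover have "c mod int r \<in> {0..<int r}"
      using r by simp
    ultimately show "u \<in> (\<lambda>c. restrict (rotate_cycles c) ?B) ` {0..<int r}" by blast
  qed
  then have "card ((\<lambda>h. restrict h ?B) ` carrier perm_group) \<le>
      card ((\<lambda>c. restrict (rotate_cycles c) ?B) ` {0..<int r})"
    by (rule card_mono[rotated]) simp
  also have "\<dots> \<le> card {0..<int r}"
    by (rule card_image_le) simp
  finally have "card ((\<lambda>h. restrict h ?B) ` carrier perm_group) \<le> r"
    by simp
  moreover have "r dvd i" if "rotation.perm 1 [^]\<^bsub>perm_group\<^esub> i \<in> ?N" for i :: nat
  proof -
    have "rotation.perm 1 [^]\<^bsub>perm_group\<^esub> i = rotation.perm (int i)"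
      by (simp add: pow_perm_group rotation.perm_pow)
    then have "rotate_cycles (int i) (Inr (r, 0)) = Inr (r, 0)"
      using that r by (auto simp: block_set_Inr rotation.perm_apply)
    then show ?thesis
      by (simp add: rotate_cycles_def dvd_eq_mod_eq_0 flip: of_nat_mod)
  qed
  ultimately show "\<exists>N. finite_index_normal perm_group N \<and> grp_index perm_group N \<le> r \<and>
      (\<forall>i. rotation.perm 1 [^]\<^bsub>perm_group\<^esub> i \<in> N \<longrightarrow> r dvd i)"
    using block_stabiliser_finite_index[of "Inr r"] by auto
qed

text \<open>The negation at position \<open>0\<close>, conjugated by the shift by \<open>2\<^sup>k\<close>, meets the lamp at
  position \<open>2\<^sup>j\<close> in block \<open>k\<close> only.\<close>
lemma lamp_positions_meet:
  assumes "0 \<le> i" "i < 2 ^ Suc j"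
  shows "(i + 2 ^ k) mod 2 ^ Suc j = 0 \<and> i = 2 ^ j \<longleftrightarrow> j = k \<and> i = (2::int) ^ k"
proof
  assume "(i + 2 ^ k) mod 2 ^ Suc j = 0 \<and> i = 2 ^ j"
  then have meet: "((2::int) ^ j + 2 ^ k) mod 2 ^ Suc j = 0" and i: "i = 2 ^ j"
    by auto
  have "j = k"
  proof (rule ccontr)
    assume "j \<noteq> k"
    then consider "j < k" | "k < j" by linarith
    then show False
    proof cases
      case 1
      then have "(2::int) ^ k = 2 ^ Suc j * 2 ^ (k - Suc j)"
        by (metis Suc_leI le_add_diff_inverse power_add)
      then show False using meet by simp
    next
      case 2
      then have "(2::int) ^ j + 2 ^ k < 2 ^ Suc j" by simp
      then have "((2::int) ^ j + 2 ^ k) mod 2 ^ Suc j = 2 ^ j + 2 ^ k"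
        by (intro mod_pos_pos_trivial) simp_all
      moreover have "(0::int) < 2 ^ j + 2 ^ k"
        by (simp add: add_pos_pos)
      ultimately show False using meet by simp
    qed
  qed
  then show "j = k \<and> i = 2 ^ k" using i by simp
next
  assume "j = k \<and> i = 2 ^ k"
  then show "(i + 2 ^ k) mod 2 ^ Suc j = 0 \<and> i = 2 ^ j" by simp
qed

definition neg_conj :: "nat \<Rightarrow> point \<Rightarrow> point" where
  "neg_conj k = shift.perm (- (2 ^ k)) \<otimes>\<^bsub>BijGroup points\<^esub> neg_perm
     \<otimes>\<^bsub>BijGroup points\<^esub> shift.perm (2 ^ k)"

definition torsion_elem :: "nat \<Rightarrow> point \<Rightarrow> point" where
  "torsion_elem k = lamp.perm (-1) \<otimes>\<^bsub>BijGroup points\<^esub> neg_conj k \<otimes>\<^bsub>BijGroup points\<^esub> lamp.perm 1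
     \<otimes>\<^bsub>BijGroup points\<^esub> neg_conj k"

lemma neg_conj_Bij: "neg_conj k \<in> Bij points"
  unfolding neg_conj_def by (intro BijGroup_mult_Bij shift.perm_Bij neg_perm_Bij)

lemma neg_conj_eq:
  assumes "y \<in> points"
  shows "neg_conj k y = shift.perm (- (2 ^ k)) (neg_perm (shift.perm (2 ^ k) y))"
proof -
  have "shift.perm (2 ^ k) y \<in> points"
    using assms shift.perm_Bij Bij_imp_funcset by blast
  moreover have "neg_perm (shift.perm (2 ^ k) y) \<in> points"
    using calculation neg_perm_Bij Bij_imp_funcset by blast
  ultimately show ?thesis
    using assms
    by (simp add: neg_conj_def BijGroup_mult_apply BijGroup_mult_Bij shift.perm_Bij neg_perm_Bij)
qed

lemma neg_conj_apply:
  assumes "Inl (j, i, x) \<in> points"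
  shows "neg_conj k (Inl (j, i, x)) =
    Inl (j, i, if (i + 2 ^ k) mod 2 ^ Suc j = 0 then (- x) mod int (lamp_prime j) else x)"
proof -
  have "shift.perm (2 ^ k) (Inl (j, i, x)) \<in> points"
    using assms shift.perm_Bij Bij_imp_funcset by blast
  then show ?thesis
    using assms lamp_neg_closed
    by (simp add: neg_conj_eq shift.perm_apply neg_perm_def shift_def lamp_neg_def mod_diff_left_eq)
qed

lemma neg_conj_apply_cycle: "Inr q \<in> points \<Longrightarrow> neg_conj k (Inr q) = Inr q"
  by (simp add: neg_conj_eq shift.perm_apply shift_def neg_perm_def lamp_neg_def)

lemma torsion_word_apply_lamp:
  assumes y: "Inl (j, i, x) \<in> points"
  shows "lamp.perm (-1) (neg_conj k (lamp.perm 1 (neg_conj k (Inl (j, i, x))))) =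
    single_lamp.perm k (-2) (Inl (j, i, x))"
proof -
  define P where "P = int (lamp_prime j)"
  have P: "2 < P" using lamp_prime_gt_2[of j] by (simp add: P_def)
  have x: "0 \<le> x" "x < P" using y by (simp_all add: P_def)
  consider "(i + 2 ^ k) mod 2 ^ Suc j = 0" "i = 2 ^ j" | "(i + 2 ^ k) mod 2 ^ Suc j = 0" "i \<noteq> 2 ^ j"
    | "(i + 2 ^ k) mod 2 ^ Suc j \<noteq> 0" by blast
  then show ?thesis
  proof cases
    case 1
    then have "j = k" "i = 2 ^ k"
      using lamp_positions_meet[of i j k] y by auto
    then show ?thesis
      using y 1 P
      by (simp add: neg_conj_apply lamp.perm_apply single_lamp.perm_apply lamp_add_def
          single_lamp_add_def mod_simps P_def[symmetric])
  next
    case 2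
    then have "\<not> (j = k \<and> i = 2 ^ k)"
      using lamp_positions_meet[of i j k] y by auto
    then show ?thesis
      using y 2 P x
      by (auto simp: neg_conj_apply lamp.perm_apply single_lamp.perm_apply lamp_add_def
          single_lamp_add_def mod_minus_eq P_def[symmetric])
  next
    case 3
    then have "\<not> (j = k \<and> i = 2 ^ k)"
      using lamp_positions_meet[of i j k] y by auto
    then show ?thesis
      using y 3 P x
      by (auto simp: neg_conj_apply lamp.perm_apply single_lamp.perm_apply lamp_add_def
          single_lamp_add_def mod_simps P_def[symmetric])
  qed
qed

lemma torsion_elem_eq: "torsion_elem k = single_lamp.perm k (-2)"
proof (rule extensionalityI[OF Bij_imp_extensional Bij_imp_extensional])
  show "torsion_elem k \<in> Bij points"
    unfolding torsion_elem_def by (intro BijGroup_mult_Bij lamp.perm_Bij neg_conj_Bij)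
  show "single_lamp.perm k (-2) \<in> Bij points"
    by (rule single_lamp.perm_Bij)
  fix y assume y: "y \<in> points"
  have closed: "neg_conj k z \<in> points" "lamp.perm c z \<in> points" if "z \<in> points" for z c
    using that neg_conj_Bij lamp.perm_Bij Bij_imp_funcset by blast+
  have "torsion_elem k y = lamp.perm (-1) (neg_conj k (lamp.perm 1 (neg_conj k y)))"
    using y closed
    by (simp add: torsion_elem_def BijGroup_mult_apply BijGroup_mult_Bij lamp.perm_Bij neg_conj_Bij)
  also have "\<dots> = single_lamp.perm k (-2) y"
    using y
    by (cases rule: points_cases)
      (simp_all add: torsion_word_apply_lamp neg_conj_apply_cycle lamp.perm_apply
        single_lamp.perm_apply lamp_add_def single_lamp_add_def)
  finally show "torsion_elem k y = single_lamp.perm k (-2) y" .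
qed

lemma torsion_elem_pow_prime: "torsion_elem k [^]\<^bsub>BijGroup points\<^esub> lamp_prime k = \<one>\<^bsub>BijGroup points\<^esub>"
proof -
  have period: "(x - 2 * P) mod P = x mod P" for x P :: int
    using mod_mult_self1[of x "-2" P] by simp
  have "single_lamp.perm k (-2 * int (lamp_prime k)) = single_lamp.perm k 0"
    unfolding single_lamp.perm_def
    by (rule restrict_ext) (auto elim!: points_cases simp: single_lamp_add_def period)
  then show ?thesis
    by (simp add: torsion_elem_eq single_lamp.perm_pow single_lamp.perm_0)
qed

lemma torsion_elem_ne_one: "torsion_elem k \<noteq> \<one>\<^bsub>BijGroup points\<^esub>"
proof
  let ?y = "Inl (k, 2 ^ k, 0) :: point"
  have y: "?y \<in> points"
    using lamp_prime_gt_2[of k] by simp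
  assume "torsion_elem k = \<one>\<^bsub>BijGroup points\<^esub>"
  then have "single_lamp.perm k (-2) ?y = ?y"
    using y by (simp add: torsion_elem_eq BijGroup_def)
  then have "single_lamp_add k (-2) ?y = ?y"
    using y by (simp add: single_lamp.perm_apply)
  then have "int (lamp_prime k) dvd 2"
    by (simp add: single_lamp_add_def mod_eq_0_iff_dvd)
  then show False
    using lamp_prime_gt_2[of k] by (simp add: zdvd_not_zless)
qed

lemma walk_reachable_torsion_elem:
  "walk_reachable perm_group generators (word_len k) (torsion_elem k)"
proof -
  interpret G: group perm_group
    by (rule group_perm_group)
  have S: "generators \<subseteq> carrier perm_group"
    using symmetric_gen_set_perm_group by (simp add: symmetric_gen_set_def)
  let ?L = "2 ^ k :: nat"
  have gens: "shift.perm 1 \<in> generators" "shift.perm (-1) \<in> generators" "lamp.perm 1 \<in> generators"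
    "lamp.perm (-1) \<in> generators" "neg_perm \<in> generators"
    by (simp_all add: generators_def)
  have "walk_reachable perm_group generators ?L (shift.perm 1 [^]\<^bsub>perm_group\<^esub> ?L)"
    "walk_reachable perm_group generators ?L (shift.perm (-1) [^]\<^bsub>perm_group\<^esub> ?L)"
    using gens by (simp_all add: walk_reachable_nat_pow)
  then have shifts: "walk_reachable perm_group generators ?L (shift.perm (2 ^ k))"
      "walk_reachable perm_group generators ?L (shift.perm (- (2 ^ k)))"
    by (simp_all add: pow_perm_group shift.perm_pow)
  have c: "walk_reachable perm_group generators (?L + 1 + ?L) (neg_conj k)"
    using G.walk_reachable_mult[OF S
        G.walk_reachable_mult[OF S shifts(2) G.walk_reachable_generator[OF S gens(5)]] shifts(1)]
    by (simp add: neg_conj_def mult_perm_group)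
  have "walk_reachable perm_group generators (1 + (?L + 1 + ?L))
      (lamp.perm (-1) \<otimes>\<^bsub>perm_group\<^esub> neg_conj k)"
    by (rule G.walk_reachable_mult[OF S G.walk_reachable_generator[OF S gens(4)] c])
  then have "walk_reachable perm_group generators (1 + (?L + 1 + ?L) + 1)
      (lamp.perm (-1) \<otimes>\<^bsub>perm_group\<^esub> neg_conj k \<otimes>\<^bsub>perm_group\<^esub> lamp.perm 1)"
    by (rule G.walk_reachable_mult[OF S _ G.walk_reachable_generator[OF S gens(3)]])
  then have "walk_reachable perm_group generators (1 + (?L + 1 + ?L) + 1 + (?L + 1 + ?L))
      (lamp.perm (-1) \<otimes>\<^bsub>perm_group\<^esub> neg_conj k \<otimes>\<^bsub>perm_group\<^esub> lamp.perm 1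
        \<otimes>\<^bsub>perm_group\<^esub> neg_conj k)"
    by (rule G.walk_reachable_mult[OF S _ c])
  then have "walk_reachable perm_group generators (1 + (?L + 1 + ?L) + 1 + (?L + 1 + ?L))
      (torsion_elem k)"
    by (simp only: torsion_elem_def mult_perm_group)
  moreover have "1 + (?L + 1 + ?L) + 1 + (?L + 1 + ?L) = word_len k"
    by (simp add: word_len_def)
  ultimately show ?thesis by simp
qed

lemma word_len_bracket:
  assumes "8 \<le> n"
  obtains k where "word_len k \<le> n" "n < word_len (Suc k)"
proof -
  define m where "m = (n - 4) div 4"
  have "1 \<le> m" using assms unfolding m_def by simp
  then obtain k where k: "2 ^ k \<le> m" "m < 2 ^ (k + 1)"
    using ex_power_ivl1[of 2 m] by auto
  have "n - 4 = 4 * m + (n - 4) mod 4" "(n - 4) mod 4 < 4"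
    unfolding m_def by simp_all
  then have "word_len k \<le> n" "n < word_len (Suc k)"
    using k assms unfolding word_len_def by simp_all
  then show ?thesis by (rule that)
qed

lemma walk_meets_large_prime_order_perm_group: "walk_meets_large_prime_order perm_group generators"
  unfolding walk_meets_large_prime_order_def eventually_sequentially
proof (intro exI[of _ 8] allI impI)
  fix n :: nat assume "8 \<le> n"
  then obtain k where k: "word_len k \<le> n" "n < word_len (Suc k)"
    by (rule word_len_bracket)
  have "real n * (2 * real (card generators)) ^ n \<le> real n * 14 ^ n"
    using card_generators by (intro mult_left_mono power_mono) auto
  also have "\<dots> \<le> real (word_len (Suc k)) * 14 ^ word_len (Suc k)"
    using k(2) by (intro mult_mono power_increasing) auto
  also have "\<dots> \<le> real (lamp_prime k)"
    using less_imp_le[OF lamp_prime(2)[of k]]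
    by (metis of_nat_le_iff of_nat_mult of_nat_numeral of_nat_power)
  finally have "real n * (2 * real (card generators)) ^ n \<le> real (lamp_prime k)" .
  moreover have "walk_reachable perm_group generators n (torsion_elem k)"
    using walk_reachable_mono[OF walk_reachable_torsion_elem k(1)] .
  moreover have "torsion_elem k [^]\<^bsub>perm_group\<^esub> lamp_prime k = \<one>\<^bsub>perm_group\<^esub>"
    using torsion_elem_pow_prime by (simp add: pow_perm_group one_perm_group)
  moreover have "torsion_elem k \<noteq> \<one>\<^bsub>perm_group\<^esub>"
    using torsion_elem_ne_one by (simp add: one_perm_group)
  ultimately show "\<exists>g p. walk_reachable perm_group generators n g \<and> g \<noteq> \<one>\<^bsub>perm_group\<^esub> \<and>
      Factorial_Ring.prime p \<and> g [^]\<^bsub>perm_group\<^esub> p = \<one>\<^bsub>perm_group\<^esub> \<and>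
      real n * (2 * real (card generators)) ^ n \<le> real p"
    using lamp_prime(1) by blast
qed

theorem proposition4p8:
  shows "\<exists>(G :: nat monoid) S.
    group G \<and> finitely_generated G \<and> residually_finite G \<and> symmetric_gen_set G S \<and>
    filterlim (\<lambda>n. measure_pmf.expectation (lazy_walk G S n) (\<lambda>x. real (D_G G x))) at_top sequentially \<and>
    summable (\<lambda>k. 1 / real (grp_index G (Lambda G (k + 2))))"
proof -
  obtain G :: "nat monoid" and f where G: "group G" "f \<in> iso perm_group G"
    using countable_group_iso_nat_monoid[OF group_perm_group countable_carrier_perm_group] by blast
  note iso = G(2) group_perm_group G(1)
  let ?S = "f ` generators"
  have S: "symmetric_gen_set G ?S"
    by (rule iso_symmetric_gen_set[OF iso symmetric_gen_set_perm_group])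
  have rf: "residually_finite G"
    by (rule iso_residually_finite[OF iso residually_finite_perm_group])
  have "walk_meets_large_prime_order G ?S"
    using iso_walk_meets_large_prime_order[OF iso _ walk_meets_large_prime_order_perm_group]
      symmetric_gen_set_perm_group by (simp add: symmetric_gen_set_def)
  then have "filterlim (\<lambda>n. measure_pmf.expectation (lazy_walk G ?S n) (\<lambda>x. real (D_G G x)))
      at_top sequentially"
    by (rule lazy_walk_expectation_D_G_at_top[OF G(1) rf S])
  moreover have z: "rotation.perm 1 \<in> carrier perm_group"
    by (simp add: carrier_perm_group generators_def generate.incl)
  then have "summable (\<lambda>k. 1 / real (grp_index G (Lambda G (k + 2))))"
    using iso_maps_onto_all_cyclic_groups[OF iso z maps_onto_all_cyclic_groups_perm_group] G(2)
    by (intro summable_inverse_index_Lambda[OF G(1)]) (auto simp: iso_def hom_def)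
  moreover have "finitely_generated G"
    using S by (auto simp: finitely_generated_def symmetric_gen_set_def)
  ultimately show ?thesis
    using G(1) rf S by blast
qed

end
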